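(* Let $n\ge2$, $0<k_0<\infty$, and let $\mathbf{Q}$ be the $(n+1)\times(n+1)$ symmetric tridiagonal matrix with $Q_{11}=1+1/k_0$, $Q_{ll}=2$ for $l=2,\dots,n$, $Q_{n+1,n+1}=1$, $Q_{lm}=-1$ if $|l-m|=1$, and $Q_{lm}=0$ otherwise. Let $\mathbb{E}_q[z_{j1}],\dots,\mathbb{E}_q[z_{jn}]>0$ and $\mu_{q(1/\xi_j^2)}>0$, and set $$\boldsymbol{\Sigma}_{q(\omega_j)}=\big(\mathsf{Diag}(0,\mathbb{E}_q[z_{j1}],\dots,\mathbb{E}_q[z_{jn}])+\mu_{q(1/\xi_j^2)}\mathbf{Q}\big)^{-1}.$$ Then $\boldsymbol{\Sigma}_{q(\omega_j)}$ is a positive matrix, i.e. $[\boldsymbol{\Sigma}_{q(\omega_j)}]_{ik}\ge0$ for all $i,k$.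
   Context: In the paper, $\mathbb{E}_q[z_{jt}]$ are means of Pólya–Gamma variational factors and $\mu_{q(1/\xi_j^2)}$ is a variational mean of an inverse-gamma precision, so both are positive; $\boldsymbol{\Sigma}_{q(\omega_j)}$ is the covariance of the optimal Gaussian variational factor of $\boldsymbol{\omega}_j$. *)

theory Defs
  imports "Jordan_Normal_Form.Matrix"
begin

(* 0-based indexing: paper index l (1..n+1) corresponds to index l-1 here. *)
definition Qmat :: "nat \<Rightarrow> real \<Rightarrow> real mat" where
  "Qmat n k0 = mat (n+1) (n+1) (\<lambda>(l, m).
     if l = m then (if l = 0 then 1 + 1 / k0 else if l = n then 1 else 2)
     else if l = m + 1 \<or> m = l + 1 then -1 else 0)"

definition Dmat :: "nat \<Rightarrow> (nat \<Rightarrow> real) \<Rightarrow> real mat" where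
  "Dmat n Ez = mat (n+1) (n+1) (\<lambda>(l, m). if l = m \<and> l \<noteq> 0 then Ez l else 0)"

definition precision_mat :: "nat \<Rightarrow> real \<Rightarrow> (nat \<Rightarrow> real) \<Rightarrow> real \<Rightarrow> real mat" where
  "precision_mat n k0 Ez mu = Dmat n Ez + mu \<cdot>\<^sub>m Qmat n k0"

end

theory Submission
  imports Defs "Jordan_Normal_Form.Determinant"
begin

text \<open>The precision matrix \<open>P = D + \<mu> Q\<close> has nonpositive off-diagonal entries and positive
  row sums (\<open>\<mu>/k\<^sub>0\<close> in the first row, \<open>E\<^sub>q[z\<^sub>j\<^sub>t]\<close> in the others, since the rows of the
  second-difference part of \<open>Q\<close> sum to zero). Such a matrix obeys a discrete minimum principle:
  if \<open>P x \<ge> 0\<close> then \<open>x \<ge> 0\<close>, because at an index where \<open>x\<close> is minimal the row sum times that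
  minimum bounds \<open>(P x)\<^sub>i\<close> from above. Applied to \<open>\<plusminus>v\<close> for a kernel vector \<open>v\<close> this gives
  nonsingularity, and applied to the columns of the inverse, which \<open>P\<close> maps to unit vectors,
  it gives entrywise nonnegativity.\<close>

definition pos_row_sums_Z_mat :: "'a :: linordered_field mat \<Rightarrow> bool" where
  "pos_row_sums_Z_mat A \<longleftrightarrow>
     (\<forall>i < dim_row A. \<forall>j < dim_col A. i \<noteq> j \<longrightarrow> A $$ (i, j) \<le> 0) \<and>
     (\<forall>i < dim_row A. 0 < (\<Sum>j < dim_col A. A $$ (i, j)))"

lemma pos_row_sums_Z_mat_minimum_principle:
  fixes A :: "'a :: linordered_field mat"
  assumes A: "A \<in> carrier_mat n n" "pos_row_sums_Z_mat A"
    and x: "x \<in> carrier_vec n"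
    and Ax: "\<And>i. i < n \<Longrightarrow> 0 \<le> (A *\<^sub>v x) $ i"
  shows "\<forall>i < n. 0 \<le> x $ i"
proof (rule ccontr)
  assume "\<not> (\<forall>i < n. 0 \<le> x $ i)"
  then have "n \<noteq> 0" by auto
  define a where "a = Min ((\<lambda>j. x $ j) ` {..<n})"
  have "a \<in> (\<lambda>j. x $ j) ` {..<n}"
    unfolding a_def using \<open>n \<noteq> 0\<close> by (intro Min_in) auto
  then obtain i where i: "i < n" "x $ i = a" by auto
  have min: "x $ i \<le> x $ j" if "j < n" for j
    unfolding i(2) a_def using that by (intro Min_le) auto
  have neg: "x $ i < 0"
    using \<open>\<not> (\<forall>i < n. 0 \<le> x $ i)\<close> min by (meson le_less_trans not_le)
  have off: "A $$ (i, j) \<le> 0" if "j < n" "j \<noteq> i" for j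
    using A i that unfolding pos_row_sums_Z_mat_def by auto
  have "(A *\<^sub>v x) $ i = (\<Sum>j < n. A $$ (i, j) * x $ j)"
    using A x i by (simp add: scalar_prod_def lessThan_atLeast0)
  also have "\<dots> \<le> (\<Sum>j < n. A $$ (i, j) * x $ i)"
    using off min by (intro sum_mono) (metis lessThan_iff mult_left_mono_neg order_refl)
  also have "\<dots> = (\<Sum>j < n. A $$ (i, j)) * x $ i"
    by (simp add: sum_distrib_right)
  also have "\<dots> < 0"
    using A i neg unfolding pos_row_sums_Z_mat_def by (simp add: mult_pos_neg)
  finally show False
    using Ax[OF i(1)] by simp
qed

lemma pos_row_sums_Z_mat_det_nonzero:
  fixes A :: "'a :: linordered_field mat"
  assumes A: "A \<in> carrier_mat n n" "pos_row_sums_Z_mat A"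
  shows "det A \<noteq> 0"
proof
  assume "det A = 0"
  then obtain v where v: "v \<in> carrier_vec n" "v \<noteq> 0\<^sub>v n" "A *\<^sub>v v = 0\<^sub>v n"
    using det_0_iff_vec_prod_zero[OF A(1)] by auto
  have "\<forall>i < n. 0 \<le> v $ i"
    using v by (intro pos_row_sums_Z_mat_minimum_principle[OF A]) auto
  moreover have "\<forall>i < n. 0 \<le> (- v) $ i"
  proof (rule pos_row_sums_Z_mat_minimum_principle[OF A])
    show "- v \<in> carrier_vec n"
      using v(1) by simp
    fix i assume "i < n"
    then have "(A *\<^sub>v (- v)) $ i = - ((A *\<^sub>v v) $ i)"
      using A(1) v(1) by simp
    then show "0 \<le> (A *\<^sub>v (- v)) $ i"
      using v(3) \<open>i < n\<close> by simp
  qed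
  ultimately have "v = 0\<^sub>v n"
    using v(1) by (intro eq_vecI) (auto intro: antisym)
  with v(2) show False ..
qed

lemma pos_row_sums_Z_mat_invertible:
  fixes A :: "'a :: linordered_field mat"
  assumes A: "A \<in> carrier_mat n n" "pos_row_sums_Z_mat A"
  shows "invertible_mat A"
proof -
  obtain B where "B \<in> carrier_mat n n" "B * A = 1\<^sub>m n" "A * B = 1\<^sub>m n"
    using det_non_zero_imp_unit[OF A(1) pos_row_sums_Z_mat_det_nonzero[OF A], of undefined]
    by (auto simp: Units_def ring_mat_def)
  with A(1) show ?thesis
    unfolding invertible_mat_def inverts_mat_def by auto
qed

lemma pos_row_sums_Z_mat_right_inverse_nonneg:
  fixes A :: "'a :: linordered_field mat"
  assumes A: "A \<in> carrier_mat n n" "pos_row_sums_Z_mat A"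
    and S: "S \<in> carrier_mat n n" "A * S = 1\<^sub>m n"
    and ik: "i < n" "k < n"
  shows "0 \<le> S $$ (i, k)"
proof -
  have "A *\<^sub>v col S k = unit_vec n k"
    using A(1) S ik by (metis col_mult2 col_one)
  then have "\<forall>r < n. 0 \<le> col S k $ r"
    using S(1) ik by (intro pos_row_sums_Z_mat_minimum_principle[OF A]) auto
  then show ?thesis
    using S(1) ik by simp
qed

lemma precision_mat_carrier: "precision_mat n k0 Ez mu \<in> carrier_mat (n+1) (n+1)"
  unfolding precision_mat_def Dmat_def Qmat_def by auto

lemma Qmat_entry:
  assumes "i < n+1" "j < n+1"
  shows "Qmat n k0 $$ (i, j) =
    (if j = i then (if i = 0 then 1 + 1 / k0 else if i = n then 1 else 2) else 0)
    + (if j = i + 1 then -1 else 0) + (if 0 < i \<and> j = i - 1 then -1 else 0)"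
  using assms unfolding Qmat_def by auto

lemma Qmat_row_sum:
  assumes "i < n+1" "1 \<le> n"
  shows "(\<Sum>j < n+1. Qmat n k0 $$ (i, j)) = (if i = 0 then 1 / k0 else 0)"
proof -
  have "(\<Sum>j < n+1. Qmat n k0 $$ (i, j)) =
      (\<Sum>j < n+1. if j = i then (if i = 0 then 1 + 1 / k0 else if i = n then 1 else 2) else 0)
    + (\<Sum>j < n+1. if j = i + 1 then -1 else 0)
    + (\<Sum>j < n+1. if 0 < i \<and> j = i - 1 then -1 else 0)"
    using assms by (simp add: Qmat_entry sum.distrib)
  also have "\<dots> = (if i = 0 then 1 / k0 else 0)"
    using assms by (auto simp: sum.If_cases)
  finally show ?thesis .
qed

lemma precision_mat_entry:
  assumes "i < n+1" "j < n+1"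
  shows "precision_mat n k0 Ez mu $$ (i, j) =
    (if j = i \<and> i \<noteq> 0 then Ez i else 0) + mu * Qmat n k0 $$ (i, j)"
  using assms unfolding precision_mat_def Dmat_def Qmat_def by auto

lemma precision_mat_row_sum:
  assumes "i < n+1" "1 \<le> n"
  shows "(\<Sum>j < n+1. precision_mat n k0 Ez mu $$ (i, j)) = (if i = 0 then mu / k0 else Ez i)"
proof -
  have "(\<Sum>j < n+1. precision_mat n k0 Ez mu $$ (i, j)) =
      (\<Sum>j < n+1. (if j = i \<and> i \<noteq> 0 then Ez i else 0) + mu * Qmat n k0 $$ (i, j))"
    using assms by (intro sum.cong) (simp_all add: precision_mat_entry)
  also have "\<dots> =
      (\<Sum>j < n+1. if j = i \<and> i \<noteq> 0 then Ez i else 0) + mu * (\<Sum>j < n+1. Qmat n k0 $$ (i, j))"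
    by (simp only: sum.distrib sum_distrib_left)
  also have "\<dots> = (if i = 0 then mu / k0 else Ez i)"
    using assms Qmat_row_sum[OF assms, of k0] by simp
  finally show ?thesis .
qed

lemma precision_mat_pos_row_sums_Z_mat:
  assumes "1 \<le> n" "0 < k0" "\<And>t. 1 \<le> t \<Longrightarrow> t \<le> n \<Longrightarrow> 0 < Ez t" "0 < mu"
  shows "pos_row_sums_Z_mat (precision_mat n k0 Ez mu)"
proof -
  have off: "precision_mat n k0 Ez mu $$ (i, j) \<le> 0" if "i < n+1" "j < n+1" "i \<noteq> j" for i j
    using that \<open>0 < mu\<close> by (simp add: precision_mat_entry Qmat_entry)
  have row: "0 < (\<Sum>j < n+1. precision_mat n k0 Ez mu $$ (i, j))" if "i < n+1" for i
    using that assms precision_mat_row_sum[OF that \<open>1 \<le> n\<close>, of k0 Ez mu] by simp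
  show ?thesis
    using precision_mat_carrier[of n k0 Ez mu] off row
    unfolding pos_row_sums_Z_mat_def by simp
qed

theorem lemma2:
  fixes n :: nat and k0 mu :: real and Ez :: "nat \<Rightarrow> real"
  assumes "n \<ge> 2" and "0 < k0"
    and "\<And>t. 1 \<le> t \<Longrightarrow> t \<le> n \<Longrightarrow> 0 < Ez t"
    and "0 < mu"
  shows "invertible_mat (precision_mat n k0 Ez mu) \<and>
    (\<forall>S \<in> carrier_mat (n+1) (n+1).
       precision_mat n k0 Ez mu * S = 1\<^sub>m (n+1) \<and> S * precision_mat n k0 Ez mu = 1\<^sub>m (n+1)
       \<longrightarrow> (\<forall>i < n+1. \<forall>k < n+1. 0 \<le> S $$ (i, k)))"
proof -
  have Z: "pos_row_sums_Z_mat (precision_mat n k0 Ez mu)"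
    using assms by (intro precision_mat_pos_row_sums_Z_mat) auto
  show ?thesis
    using pos_row_sums_Z_mat_invertible[OF precision_mat_carrier Z]
      pos_row_sums_Z_mat_right_inverse_nonneg[OF precision_mat_carrier Z]
    by blast
qed

end
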